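(* Suppose $\rho>1$ satisfies $|\lambda|<\rho<\lambda_0$ for every non-dominant eigenvalue $\lambda$ of $T$. Then there is an integer $K$ such that for every $k\ge K$ and every pair of admissible $(k+1)$-words $w_1,w_2$, the Perron–Frobenius eigenvalue $\lambda_1$ of $T_k\langle\{w_1,w_2\}\rangle$ satisfies $\lambda_1\ge\rho$.
   Context: Let $\mathcal{A}$ be a finite alphabet of $r$ symbols and $T=(T_{x,y})$ an irreducible $r\times r$ matrix with entries in $\{0,1\}$ (the directed graph on $\mathcal{A}$ with an edge $x\to y$ iff $T_{y,x}=1$ is strongly connected). Its Perron–Frobenius eigenvalue $\lambda_0$ is its spectral radius; the dominant eigenvalues of $T$ are those of modulus $\lambda_0$, and the other eigenvalues are called non-dominant. An admissible $k$-word is a string $a_1\cdots a_k$ with $T_{a_{i+1},a_i}=1$ for all $i$. $V_k$ is the complex vector space with basis $\{[w]\}$ indexed by admissible $k$-words; $T_k:V_k\to V_k$ is linear with $T_k([a_1\cdots a_k])=\sum[a_2\cdots a_kx]$ over symbols $x$ with $a_2\cdots a_kx$ admissible. For a word $w$, $\beta w$, $\eta w$ are obtained by deleting the last, resp. first, symbol. For an admissible $(k+1)$-word $w$, $E_w:V_k\to V_k$ is linear with $E_w[\beta w]=[\eta w]$ and $E_w[u]=0$ for all other admissible $k$-words $u$. For a set $\mathcal{C}$ of admissible $(k+1)$-words, $T_k\langle\mathcal{C}\rangle=T_k-\sum_{w\in\mathcal{C}}E_w$; its matrix in the word basis is a non-negative $0/1$ matrix, and its Perron–Frobenius eigenvalue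 is its spectral radius, which is an eigenvalue. *)

theory Defs
  imports Complex_Main
begin

text \<open>Square matrices indexed by a finite carrier set S are represented as functions
  M :: 'b \<Rightarrow> 'b \<Rightarrow> real, with M x y the entry in row x, column y;
  the matrix acts on column vectors by (M v) x = sum over y in S of M x y * v y.\<close>

definition is_eigenvalue :: "'b set \<Rightarrow> ('b \<Rightarrow> 'b \<Rightarrow> real) \<Rightarrow> complex \<Rightarrow> bool" where
  "is_eigenvalue S M lam \<longleftrightarrow>
     (\<exists>v :: 'b \<Rightarrow> complex. (\<exists>x\<in>S. v x \<noteq> 0) \<and>
        (\<forall>x\<in>S. (\<Sum>y\<in>S. complex_of_real (M x y) * v y) = lam * v x))"

definition spectral_radius :: "'b set \<Rightarrow> ('b \<Rightarrow> 'b \<Rightarrow> real) \<Rightarrow> real" where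
  "spectral_radius S M = Max (cmod ` {lam. is_eigenvalue S M lam})"

text \<open>For non-negative matrices the Perron--Frobenius eigenvalue is the spectral radius.\<close>
definition pf_eigenvalue :: "'b set \<Rightarrow> ('b \<Rightarrow> 'b \<Rightarrow> real) \<Rightarrow> real" where
  "pf_eigenvalue S M = spectral_radius S M"

definition irreducible01 :: "('a \<Rightarrow> 'a \<Rightarrow> real) \<Rightarrow> bool" where
  "irreducible01 T \<longleftrightarrow> (\<forall>x y. (x, y) \<in> {(a, b). T b a = 1}\<^sup>*)"

definition admissible :: "('a \<Rightarrow> 'a \<Rightarrow> real) \<Rightarrow> 'a list \<Rightarrow> bool" where
  "admissible T w \<longleftrightarrow> (\<forall>i. Suc i < length w \<longrightarrow> T (w ! Suc i) (w ! i) = 1)"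

definition adm_words :: "('a \<Rightarrow> 'a \<Rightarrow> real) \<Rightarrow> nat \<Rightarrow> 'a list set" where
  "adm_words T k = {w. length w = k \<and> admissible T w}"

text \<open>Matrix of T_k in the word basis: T_k [w] = sum of [tl w @ [x]] over admissible
  such words, so the entry in row u, column w is 1 iff u = tl w @ [x] for some x.\<close>
definition Tk :: "('a \<Rightarrow> 'a \<Rightarrow> real) \<Rightarrow> nat \<Rightarrow> 'a list \<Rightarrow> 'a list \<Rightarrow> real" where
  "Tk T k u w = (if u \<in> adm_words T k \<and> w \<in> adm_words T k \<and> length u = k \<and> k \<ge> 1
                    \<and> butlast u = tl w then 1 else 0)"

text \<open>E_w for a (k+1)-word w: maps [beta w] = [butlast w] to [eta w] = [tl w], all other
  basis vectors to 0.\<close>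
definition Ew :: "'a list \<Rightarrow> 'a list \<Rightarrow> 'a list \<Rightarrow> real" where
  "Ew w u v = (if u = tl w \<and> v = butlast w then 1 else 0)"

definition Tk_del :: "('a \<Rightarrow> 'a \<Rightarrow> real) \<Rightarrow> nat \<Rightarrow> 'a list set \<Rightarrow> 'a list \<Rightarrow> 'a list \<Rightarrow> real" where
  "Tk_del T k C u v = Tk T k u v - (\<Sum>w\<in>C. Ew w u v)"

end

(* Let l be the Perron-Frobenius eigenvalue of T. The number of admissible words of length n + 1
   lies between l^n and a polynomial in n times l^n, the upper bound coming from the Jordan normal
   form. Hence, for large k, most admissible words of length L = 2k + 2 contain neither deleted
   (k + 1)-word and neither begin nor end with a piece of length about k/2 of one. Pigeonholing on
   the first and last letters, and joining such blocks by one fixed connecting word c of bounded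
   length, yields at least rho^(j (L + |c|)) admissible words of length j (L + |c|) avoiding both
   deleted words. Their sequences of length-k windows are distinct paths in the graph of
   T_k<{w1, w2}>, so the entry sums of the powers of this matrix grow like rho^n; this is
   impossible if its spectral radius were below rho. *)

theory Submission
  imports Defs Jordan_Normal_Form.Jordan_Normal_Form_Existence "HOL-Library.Sublist"
begin

section \<open>Powers of matrices over a finite index set\<close>

fun mpow :: "'b set \<Rightarrow> ('b \<Rightarrow> 'b \<Rightarrow> real) \<Rightarrow> nat \<Rightarrow> 'b \<Rightarrow> 'b \<Rightarrow> real" where
  "mpow S M 0 x y = (if x = y then 1 else 0)"
| "mpow S M (Suc n) x y = (\<Sum>z\<in>S. mpow S M n x z * M z y)"

definition mpow_total :: "'b set \<Rightarrow> ('b \<Rightarrow> 'b \<Rightarrow> real) \<Rightarrow> nat \<Rightarrow> real" where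
  "mpow_total S M n = (\<Sum>a\<in>S. \<Sum>b\<in>S. mpow S M n a b)"

lemma mpow_nonneg:
  assumes "\<forall>x\<in>S. \<forall>y\<in>S. M x y \<ge> 0" "x \<in> S" "y \<in> S"
  shows "mpow S M n x y \<ge> 0"
  using assms(3)
proof (induction n arbitrary: y)
  case (Suc n) then show ?case using assms by (auto intro!: sum_nonneg)
qed simp

lemma mpow_divide: "mpow S (\<lambda>x y. M x y / s) k x y = mpow S M k x y / s ^ k"
  by (induction k arbitrary: y) (simp_all add: sum_divide_distrib mult.commute)

lemma mpow_eigenvector:
  assumes fin: "finite S" and e: "\<forall>x\<in>S. (\<Sum>y\<in>S. complex_of_real (M x y) * v y) = lam * v x"
    and x: "x \<in> S"
  shows "(\<Sum>y\<in>S. complex_of_real (mpow S M n x y) * v y) = lam ^ n * v x"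
proof (induction n)
  case 0
  have "(\<Sum>y\<in>S. complex_of_real (mpow S M 0 x y) * v y) = (\<Sum>y\<in>S. if y = x then v y else 0)"
    by (intro sum.cong) auto
  also have "\<dots> = v x" using x fin by (simp add: sum.delta[of S x v])
  finally show ?case by simp
next
  case (Suc n)
  have "(\<Sum>y\<in>S. complex_of_real (mpow S M (Suc n) x y) * v y)
      = (\<Sum>y\<in>S. \<Sum>z\<in>S. complex_of_real (mpow S M n x z) * (complex_of_real (M z y) * v y))"
    by (simp add: sum_distrib_right mult.assoc)
  also have "\<dots> = (\<Sum>z\<in>S. complex_of_real (mpow S M n x z) * (\<Sum>y\<in>S. complex_of_real (M z y) * v y))"
    by (subst sum.swap) (simp add: sum_distrib_left)
  also have "\<dots> = (\<Sum>z\<in>S. complex_of_real (mpow S M n x z) * (lam * v z))"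
    using e by (intro sum.cong) auto
  also have "\<dots> = lam * (\<Sum>z\<in>S. complex_of_real (mpow S M n x z) * v z)"
    by (simp add: sum_distrib_left mult.left_commute)
  also have "\<dots> = lam ^ Suc n * v x" using Suc by simp
  finally show ?case .
qed

lemma is_eigenvalue_divide:
  assumes "is_eigenvalue S (\<lambda>x y. M x y / s) mu" and "s \<noteq> 0"
  shows "is_eigenvalue S M (complex_of_real s * mu)"
proof -
  obtain v where v: "\<exists>x\<in>S. v x \<noteq> 0"
    and e: "\<forall>x\<in>S. (\<Sum>y\<in>S. complex_of_real (M x y / s) * v y) = mu * v x"
    using assms(1) unfolding is_eigenvalue_def by blast
  have "(\<Sum>y\<in>S. complex_of_real (M x y) * v y) = (complex_of_real s * mu) * v x" if "x \<in> S" for x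
  proof -
    have "(\<Sum>y\<in>S. complex_of_real (M x y) * v y)
        = complex_of_real s * (\<Sum>y\<in>S. complex_of_real (M x y / s) * v y)"
      using assms(2) by (simp add: sum_distrib_left)
    then show ?thesis using e that by simp
  qed
  then show ?thesis using v unfolding is_eigenvalue_def by blast
qed

section \<open>Transfer to the matrices of the Jordan normal form library\<close>

definition mat_of_fun :: "nat \<Rightarrow> (nat \<Rightarrow> 'b) \<Rightarrow> ('b \<Rightarrow> 'b \<Rightarrow> real) \<Rightarrow> complex mat" where
  "mat_of_fun n f M = mat n n (\<lambda>(i, j). complex_of_real (M (f i) (f j)))"

lemma mat_of_fun_carrier: "mat_of_fun n f M \<in> carrier_mat n n"
  by (simp add: mat_of_fun_def)

lemma mat_of_fun_power:
  assumes f: "bij_betw f {0..<n} S" and i: "i < n" and j: "j < n"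
  shows "(mat_of_fun n f M ^\<^sub>m k) $$ (i, j) = complex_of_real (mpow S M k (f i) (f j))"
  using j
proof (induction k arbitrary: j)
  case 0
  have "f i = f j \<longleftrightarrow> i = j" using f i 0 by (auto simp: bij_betw_def inj_on_def)
  then show ?case using i 0 by (simp add: mat_of_fun_def)
next
  case (Suc k)
  have "(mat_of_fun n f M ^\<^sub>m Suc k) $$ (i, j) = row (mat_of_fun n f M ^\<^sub>m k) i \<bullet> col (mat_of_fun n f M) j"
    using i Suc.prems by (simp add: mat_of_fun_def)
  also have "\<dots> = (\<Sum>l\<in>{0..<n}. complex_of_real (mpow S M k (f i) (f l) * M (f l) (f j)))"
    unfolding scalar_prod_def using i Suc by (auto simp: mat_of_fun_def intro!: sum.cong)
  also have "\<dots> = (\<Sum>z\<in>S. complex_of_real (mpow S M k (f i) z * M z (f j)))"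
    using sum.reindex_bij_betw[OF f] by simp
  finally show ?case by simp
qed

lemma eigenvalue_mat_of_fun:
  assumes f: "bij_betw f {0..<n} S" and ev: "is_eigenvalue S M lam"
  shows "eigenvalue (mat_of_fun n f M) lam"
proof -
  obtain v where v: "\<exists>x\<in>S. v x \<noteq> 0"
    and e: "\<forall>x\<in>S. (\<Sum>y\<in>S. complex_of_real (M x y) * v y) = lam * v x"
    using ev unfolding is_eigenvalue_def by blast
  define v' where "v' = vec n (\<lambda>i. v (f i))"
  obtain x where x: "x \<in> S" "v x \<noteq> 0" using v by blast
  obtain i where i: "i < n" "f i = x" using f x by (auto simp: bij_betw_def)
  have ne: "v' \<noteq> 0\<^sub>v n"
  proof
    assume "v' = 0\<^sub>v n"
    then have "v' $ i = 0" using i by simp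
    then show False using i x by (simp add: v'_def)
  qed
  have "mat_of_fun n f M *\<^sub>v v' = lam \<cdot>\<^sub>v v'"
  proof (rule eq_vecI)
    fix l assume "l < dim_vec (lam \<cdot>\<^sub>v v')"
    then have l: "l < n" by (simp add: v'_def)
    have "(mat_of_fun n f M *\<^sub>v v') $ l = (\<Sum>m\<in>{0..<n}. complex_of_real (M (f l) (f m)) * v (f m))"
      using l by (auto simp: mat_of_fun_def v'_def scalar_prod_def intro!: sum.cong)
    also have "\<dots> = (\<Sum>y\<in>S. complex_of_real (M (f l) y) * v y)"
      using sum.reindex_bij_betw[OF f] by simp
    also have "\<dots> = lam * v (f l)" using e f l by (auto simp: bij_betw_def)
    finally show "(mat_of_fun n f M *\<^sub>v v') $ l = (lam \<cdot>\<^sub>v v') $ l" using l by (simp add: v'_def)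
  qed (simp add: mat_of_fun_def v'_def)
  then show ?thesis unfolding eigenvalue_def eigenvector_def using ne
    by (intro exI[of _ v']) (simp add: mat_of_fun_def v'_def)
qed

lemma is_eigenvalue_of_mat_of_fun:
  assumes f: "bij_betw f {0..<n} S" and ev: "eigenvalue (mat_of_fun n f M) lam"
  shows "is_eigenvalue S M lam"
proof -
  obtain v' where v': "v' \<in> carrier_vec n" "v' \<noteq> 0\<^sub>v n" "mat_of_fun n f M *\<^sub>v v' = lam \<cdot>\<^sub>v v'"
    using ev unfolding eigenvalue_def eigenvector_def by (auto simp: mat_of_fun_def)
  define g where "g = inv_into {0..<n} f"
  have gf: "\<And>i. i < n \<Longrightarrow> g (f i) = i" using f unfolding g_def bij_betw_def
    by (simp add: inv_into_f_f)
  have fg: "\<And>x. x \<in> S \<Longrightarrow> f (g x) = x \<and> g x < n" using f unfolding g_def bij_betw_def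
    by (metis atLeastLessThan_iff f_inv_into_f inv_into_into)
  define v where "v = (\<lambda>x. v' $ (g x))"
  obtain i where i: "i < n" "v' $ i \<noteq> 0" using v' by (metis carrier_vecD eq_vecI index_zero_vec)
  have "f i \<in> S" using f i by (auto simp: bij_betw_def)
  moreover have "v (f i) \<noteq> 0" using i gf by (simp add: v_def)
  moreover have "(\<Sum>y\<in>S. complex_of_real (M x y) * v y) = lam * v x" if x: "x \<in> S" for x
  proof -
    have "(\<Sum>y\<in>S. complex_of_real (M x y) * v y)
        = (\<Sum>m\<in>{0..<n}. complex_of_real (M (f (g x)) (f m)) * v (f m))"
      using sum.reindex_bij_betw[OF f, of "\<lambda>y. complex_of_real (M x y) * v y"] fg x by simp
    also have "\<dots> = (mat_of_fun n f M *\<^sub>v v') $ (g x)"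
      using fg[OF x] v'(1) by (auto simp: mat_of_fun_def v_def gf scalar_prod_def intro!: sum.cong)
    also have "\<dots> = lam * v x" using v' fg[OF x] by (simp add: v_def)
    finally show ?thesis .
  qed
  ultimately show ?thesis unfolding is_eigenvalue_def by blast
qed

lemma is_eigenvalue_iff_root_char_poly:
  assumes "bij_betw f {0..<n} S"
  shows "is_eigenvalue S M lam \<longleftrightarrow> poly (char_poly (mat_of_fun n f M)) lam = 0"
  using eigenvalue_mat_of_fun[OF assms] is_eigenvalue_of_mat_of_fun[OF assms]
    eigenvalue_root_char_poly[OF mat_of_fun_carrier] by blast

lemma finite_eigenvalues:
  assumes "finite S"
  shows "finite {lam. is_eigenvalue S M lam}"
proof -
  obtain f where f: "bij_betw f {0..<card S} S" using ex_bij_betw_nat_finite[OF assms] by blast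
  have "char_poly (mat_of_fun (card S) f M) \<noteq> 0"
    using degree_monic_char_poly[OF mat_of_fun_carrier, of "card S" f M] by fastforce
  from poly_roots_finite[OF this] show ?thesis
    unfolding is_eigenvalue_iff_root_char_poly[OF f] .
qed

lemma eigenvalue_exists:
  assumes "finite S" "S \<noteq> {}"
  shows "\<exists>lam. is_eigenvalue S M lam"
proof -
  obtain f where f: "bij_betw f {0..<card S} S" using ex_bij_betw_nat_finite[OF assms(1)] by blast
  have "degree (char_poly (mat_of_fun (card S) f M)) = card S" "card S > 0"
    using degree_monic_char_poly[OF mat_of_fun_carrier] assms by auto
  then have "\<not> constant (poly (char_poly (mat_of_fun (card S) f M)))"
    by (simp add: constant_degree)
  from fundamental_theorem_of_algebra[OF this] show ?thesis
    unfolding is_eigenvalue_iff_root_char_poly[OF f] .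
qed

lemma norm_eigenvalue_le_spectral_radius:
  assumes "finite S" "is_eigenvalue S M lam"
  shows "cmod lam \<le> spectral_radius S M"
  unfolding spectral_radius_def using finite_eigenvalues[OF assms(1), of M] assms(2)
  by (intro Max_ge) auto

lemma spectral_radius_attained:
  assumes "finite S" "S \<noteq> {}"
  shows "\<exists>lam. is_eigenvalue S M lam \<and> cmod lam = spectral_radius S M"
proof -
  have "spectral_radius S M \<in> cmod ` {lam. is_eigenvalue S M lam}"
    unfolding spectral_radius_def using finite_eigenvalues[OF assms(1), of M] eigenvalue_exists[OF assms]
    by (intro Max_in) auto
  then show ?thesis by auto
qed

section \<open>Growth of matrix powers and the spectral radius\<close>

lemma mpow_le_poly_if_eigenvalues_le_1:
  assumes S: "finite S" and le1: "\<And>lam. is_eigenvalue S M lam \<Longrightarrow> cmod lam \<le> 1"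
  shows "\<exists>c. \<forall>k x y. x \<in> S \<longrightarrow> y \<in> S \<longrightarrow> \<bar>mpow S M k x y\<bar> \<le> c * (real k + 1) ^ card S"
proof -
  obtain f where f: "bij_betw f {0..<card S} S" using ex_bij_betw_nat_finite[OF S] by blast
  let ?n = "card S"
  let ?A = "mat_of_fun ?n f M"
  have A: "?A \<in> carrier_mat ?n ?n" by (rule mat_of_fun_carrier)
  obtain as where cA: "char_poly ?A = (\<Prod>a\<leftarrow>as. [:- a, 1:])" and len: "length as = ?n"
    using char_poly_factorized[OF A] by blast
  have "\<exists>c1 c2. \<forall>k. norm_bound (?A ^\<^sub>m k) (c1 + c2 * of_nat k ^ (?n - 1))"
  proof (rule factored_char_poly_norm_bound_cof[OF A cA])
    fix a assume a: "a \<in> set as"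
    have "poly (char_poly ?A) a = 0" unfolding cA by (rule linear_poly_root[OF a])
    then show "norm a \<le> 1" using le1 is_eigenvalue_iff_root_char_poly[OF f] by auto
  next
    fix a show "length (filter ((=) a) as) \<le> ?n" using len by (metis length_filter_le)
  qed
  then obtain c1 c2 where b: "\<And>k. norm_bound (?A ^\<^sub>m k) (c1 + c2 * of_nat k ^ (?n - 1))" by blast
  show ?thesis
  proof (intro exI[of _ "\<bar>c1\<bar> + \<bar>c2\<bar>"] allI impI)
    fix k x y assume x: "x \<in> S" and y: "y \<in> S"
    obtain i where i: "i < ?n" "f i = x" using f x unfolding bij_betw_def by force
    obtain j where j: "j < ?n" "f j = y" using f y unfolding bij_betw_def by force
    have "norm ((?A ^\<^sub>m k) $$ (i, j)) \<le> c1 + c2 * of_nat k ^ (?n - 1)"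
      using b[of k] i j A unfolding norm_bound_def by auto
    then have "\<bar>mpow S M k x y\<bar> \<le> c1 + c2 * real k ^ (?n - 1)"
      using mat_of_fun_power[OF f i(1) j(1)] i j by simp
    also have "\<dots> \<le> \<bar>c1\<bar> * (real k + 1) ^ ?n + \<bar>c2\<bar> * (real k + 1) ^ ?n"
    proof (intro add_mono)
      show "c1 \<le> \<bar>c1\<bar> * (real k + 1) ^ ?n"
        using mult_left_mono[of 1 "(real k + 1) ^ ?n" "\<bar>c1\<bar>"] by (simp add: one_le_power)
      have "real k ^ (?n - 1) \<le> (real k + 1) ^ ?n"
        using power_mono[of "real k" "real k + 1" "?n - 1"] power_increasing[of "?n - 1" ?n "real k + 1"]
        by simp
      then show "c2 * real k ^ (?n - 1) \<le> \<bar>c2\<bar> * (real k + 1) ^ ?n"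
        by (smt (verit) mult_left_mono mult_right_mono zero_le_power of_nat_0_le_iff)
    qed
    finally show "\<bar>mpow S M k x y\<bar> \<le> (\<bar>c1\<bar> + \<bar>c2\<bar>) * (real k + 1) ^ ?n"
      by (simp add: algebra_simps)
  qed
qed

lemma mpow_total_le_poly_exp:
  assumes S: "finite S" and s: "s > 0" and les: "\<And>lam. is_eigenvalue S M lam \<Longrightarrow> cmod lam \<le> s"
  shows "\<exists>c. \<forall>n. mpow_total S M n \<le> c * (real n + 1) ^ card S * s ^ n"
proof -
  have "cmod mu \<le> 1" if "is_eigenvalue S (\<lambda>x y. M x y / s) mu" for mu
  proof -
    have "cmod (complex_of_real s * mu) \<le> s"
      using les is_eigenvalue_divide[OF that] s by simp
    then show ?thesis using s by (simp add: norm_mult)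
  qed
  from mpow_le_poly_if_eigenvalues_le_1[of S "\<lambda>x y. M x y / s", OF S this] obtain c
    where "\<forall>k x y. x \<in> S \<longrightarrow> y \<in> S \<longrightarrow> \<bar>mpow S (\<lambda>x y. M x y / s) k x y\<bar> \<le> c * (real k + 1) ^ card S"
    by blast
  then have c: "\<And>k x y. x \<in> S \<Longrightarrow> y \<in> S \<Longrightarrow> \<bar>mpow S M k x y\<bar> / s ^ k \<le> c * (real k + 1) ^ card S"
    using s by (simp add: mpow_divide abs_divide)
  have "mpow_total S M n \<le> (real (card S) ^ 2 * \<bar>c\<bar>) * (real n + 1) ^ card S * s ^ n" for n
  proof -
    have "mpow_total S M n \<le> (\<Sum>a\<in>S. \<Sum>b\<in>S. \<bar>c\<bar> * (real n + 1) ^ card S * s ^ n)"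
      unfolding mpow_total_def
    proof (intro sum_mono)
      fix a b assume "a \<in> S" "b \<in> S"
      then have "\<bar>mpow S M n a b\<bar> \<le> c * (real n + 1) ^ card S * s ^ n"
        using c[of a b n] s by (simp add: divide_le_eq)
      also have "\<dots> \<le> \<bar>c\<bar> * (real n + 1) ^ card S * s ^ n"
        using s by (intro mult_right_mono) auto
      finally show "mpow S M n a b \<le> \<bar>c\<bar> * (real n + 1) ^ card S * s ^ n" by linarith
    qed
    then show ?thesis by (simp add: power2_eq_square)
  qed
  then show ?thesis by blast
qed

lemma poly_div_exp_tendsto_0:
  fixes q :: real assumes q: "q > 1"
  shows "(\<lambda>j. (real j + 1) ^ D / q ^ j) \<longlonglongrightarrow> 0"
proof -
  define mu where "mu = root (Suc D) q"
  have mu1: "mu > 1" using q by (simp add: mu_def)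
  have mup: "mu ^ Suc D = q" using q unfolding mu_def by (intro real_root_pow_pos2) auto
  have im: "norm (inverse mu) < 1" using mu1 by (simp add: inverse_less_1_iff)
  have "(\<lambda>j. real j * inverse mu ^ j + inverse mu ^ j) \<longlonglongrightarrow> 0 + 0"
    by (intro tendsto_add powser_times_n_limit_0 LIMSEQ_power_zero im)
  then have "(\<lambda>j. (real j * inverse mu ^ j + inverse mu ^ j) ^ Suc D) \<longlonglongrightarrow> (0 + 0) ^ Suc D"
    by (rule tendsto_power)
  moreover have "real j * inverse mu ^ j + inverse mu ^ j = (real j + 1) / mu ^ j" for j
    by (simp add: divide_inverse power_inverse distrib_right)
  ultimately have lim: "(\<lambda>j. ((real j + 1) / mu ^ j) ^ Suc D) \<longlonglongrightarrow> 0"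
    by simp
  show ?thesis
  proof (rule tendsto_sandwich[OF _ _ tendsto_const lim])
    show "\<forall>\<^sub>F j in sequentially. 0 \<le> (real j + 1) ^ D / q ^ j" using q by auto
    show "\<forall>\<^sub>F j in sequentially. (real j + 1) ^ D / q ^ j \<le> ((real j + 1) / mu ^ j) ^ Suc D"
    proof (intro always_eventually allI)
      fix j
      have "((real j + 1) / mu ^ j) ^ Suc D = (real j + 1) ^ Suc D / q ^ j"
        by (metis mup power_mult mult.commute power_divide)
      moreover have "(real j + 1) ^ D \<le> (real j + 1) ^ Suc D" by (intro power_increasing) auto
      ultimately show "(real j + 1) ^ D / q ^ j \<le> ((real j + 1) / mu ^ j) ^ Suc D"
        using q by (simp add: divide_right_mono)
    qed
  qed
qed

lemma eventually_poly_le_exp: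
  fixes q A :: real assumes q: "q > 1"
  shows "\<forall>\<^sub>F j in sequentially. A * (real j + 1) ^ D \<le> q ^ j"
proof -
  have "\<forall>\<^sub>F j in sequentially. (real j + 1) ^ D / q ^ j < 1 / (\<bar>A\<bar> + 1)"
    using order_tendstoD(2)[OF poly_div_exp_tendsto_0[OF q]] by simp
  then show ?thesis
  proof (rule eventually_mono)
    fix j assume "(real j + 1) ^ D / q ^ j < 1 / (\<bar>A\<bar> + 1)"
    then have "(\<bar>A\<bar> + 1) * (real j + 1) ^ D < q ^ j" using q by (simp add: field_simps)
    moreover have "A * (real j + 1) ^ D \<le> (\<bar>A\<bar> + 1) * (real j + 1) ^ D"
      by (intro mult_right_mono) auto
    ultimately show "A * (real j + 1) ^ D \<le> q ^ j" by linarith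
  qed
qed

lemma exp_gt_poly:
  fixes q K :: real assumes q: "q > 1"
  shows "\<exists>j\<ge>1. K * (real j + 1) ^ D < q ^ j"
proof -
  obtain j where "j \<ge> 1" and j: "(K + 1) * (real j + 1) ^ D \<le> q ^ j"
    using eventually_conj[OF eventually_ge_at_top[of 1] eventually_poly_le_exp[OF q]]
    unfolding eventually_sequentially by blast
  moreover have "K * (real j + 1) ^ D < (K + 1) * (real j + 1) ^ D" by (simp add: distrib_right)
  ultimately show ?thesis using less_le_trans by blast
qed

lemma spectral_radius_power_le_mpow_total:
  assumes S: "finite S" "S \<noteq> {}" and nn: "\<forall>x\<in>S. \<forall>y\<in>S. M x y \<ge> 0"
  shows "spectral_radius S M ^ n \<le> mpow_total S M n"
proof -
  obtain lam where lam: "is_eigenvalue S M lam" "cmod lam = spectral_radius S M"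
    using spectral_radius_attained[OF S] by blast
  obtain v where v: "\<exists>x\<in>S. v x \<noteq> 0"
    and e: "\<forall>x\<in>S. (\<Sum>y\<in>S. complex_of_real (M x y) * v y) = lam * v x"
    using lam(1) unfolding is_eigenvalue_def by blast
  define m where "m = Max ((\<lambda>y. cmod (v y)) ` S)"
  have "m \<in> (\<lambda>y. cmod (v y)) ` S" unfolding m_def using S by (intro Max_in) auto
  then obtain x where x: "x \<in> S" "cmod (v x) = m" by auto
  have mx: "\<And>y. y \<in> S \<Longrightarrow> cmod (v y) \<le> m" unfolding m_def using S by (intro Max_ge) auto
  have mpos: "m > 0" using v mx by (smt (verit) norm_le_zero_iff)
  have "spectral_radius S M ^ n * m = cmod (lam ^ n * v x)"
    using lam x by (simp add: norm_mult norm_power)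
  also have "\<dots> = cmod (\<Sum>y\<in>S. complex_of_real (mpow S M n x y) * v y)"
    using mpow_eigenvector[OF S(1) e x(1)] by simp
  also have "\<dots> \<le> (\<Sum>y\<in>S. cmod (complex_of_real (mpow S M n x y) * v y))" by (rule norm_sum)
  also have "\<dots> \<le> (\<Sum>y\<in>S. mpow S M n x y * m)"
  proof (intro sum_mono)
    fix y assume y: "y \<in> S"
    then show "cmod (complex_of_real (mpow S M n x y) * v y) \<le> mpow S M n x y * m"
      using mx[OF y] mpow_nonneg[OF nn x(1) y] by (simp add: norm_mult mult_left_mono)
  qed
  also have "\<dots> = (\<Sum>y\<in>S. mpow S M n x y) * m" by (simp add: sum_distrib_right)
  finally have "spectral_radius S M ^ n \<le> (\<Sum>y\<in>S. mpow S M n x y)" using mpos by simp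
  also have "\<dots> \<le> mpow_total S M n"
    unfolding mpow_total_def using S x(1) mpow_nonneg[OF nn]
    by (intro member_le_sum[of x S "\<lambda>a. \<Sum>b\<in>S. mpow S M n a b"]) (auto intro!: sum_nonneg)
  finally show ?thesis .
qed

lemma spectral_radius_ge_if_mpow_total_grows:
  assumes S: "finite S" and rho: "rho > 1" and L: "L > 0" and G: "rho ^ L \<le> G"
    and f: "\<And>j. f j \<le> j * L"
    and grows: "\<And>j. j \<ge> 1 \<Longrightarrow> G ^ j \<le> mpow_total S M (f j)"
  shows "rho \<le> spectral_radius S M"
proof (rule ccontr)
  assume "\<not> rho \<le> spectral_radius S M"
  define s where "s = max (spectral_radius S M) 1"
  have s1: "s \<ge> 1" and srho: "s < rho" using \<open>\<not> rho \<le> spectral_radius S M\<close> rho by (auto simp: s_def)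
  have "cmod lam \<le> s" if "is_eigenvalue S M lam" for lam
    using norm_eigenvalue_le_spectral_radius[OF S that] by (simp add: s_def)
  then obtain c where c: "\<And>n. mpow_total S M n \<le> c * (real n + 1) ^ card S * s ^ n"
    using mpow_total_le_poly_exp[OF S, of s M] s1 by auto
  define q where "q = G / s ^ L"
  have "1 < (rho / s) ^ L" using srho s1 L by (simp add: one_less_power)
  also have "\<dots> \<le> q" using G s1 unfolding q_def by (simp add: power_divide divide_right_mono)
  finally have q1: "q > 1" .
  define K where "K = \<bar>c\<bar> * real L ^ card S"
  have bound: "q ^ j \<le> K * (real j + 1) ^ card S" if j: "j \<ge> 1" for j
  proof -
    have "real (f j) + 1 \<le> real L * (real j + 1)"
      using f[of j] L of_nat_mono[of "f j + 1" "L * (j + 1)"] by (simp add: algebra_simps)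
    then have "(real (f j) + 1) ^ card S \<le> (real L * (real j + 1)) ^ card S"
      by (intro power_mono) auto
    moreover have "s ^ f j \<le> s ^ (j * L)" using f[of j] s1 by (intro power_increasing) auto
    ultimately have AB: "(real (f j) + 1) ^ card S * s ^ f j \<le> (real L * (real j + 1)) ^ card S * s ^ (j * L)"
      using s1 by (intro mult_mono) auto
    have "G ^ j \<le> c * (real (f j) + 1) ^ card S * s ^ f j"
      using grows[OF j] c[of "f j"] by linarith
    also have "\<dots> \<le> \<bar>c\<bar> * ((real (f j) + 1) ^ card S * s ^ f j)"
      using s1 by (simp add: mult.assoc mult_right_mono)
    also have "\<dots> \<le> \<bar>c\<bar> * ((real L * (real j + 1)) ^ card S * s ^ (j * L))"
      using AB by (intro mult_left_mono) auto
    also have "\<dots> = K * (real j + 1) ^ card S * (s ^ L) ^ j"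
      by (simp add: K_def power_mult_distrib power_mult mult.commute mult.left_commute)
    finally have "G ^ j \<le> K * (real j + 1) ^ card S * (s ^ L) ^ j" .
    then show ?thesis using s1 unfolding q_def by (simp add: power_divide divide_le_eq)
  qed
  obtain j where "j \<ge> 1" "K * (real j + 1) ^ card S < q ^ j" using exp_gt_poly[OF q1] by blast
  then show False using bound[of j] by simp
qed

section \<open>Counting paths\<close>

definition paths :: "'b set \<Rightarrow> ('b \<Rightarrow> 'b \<Rightarrow> real) \<Rightarrow> nat \<Rightarrow> 'b list set" where
  "paths S M n = {p. length p = Suc n \<and> set p \<subseteq> S \<and> successively (\<lambda>x y. M y x = 1) p}"

lemma finite_paths: "finite S \<Longrightarrow> finite (paths S M n)"
  by (rule finite_subset[OF _ finite_lists_length_eq[of S "Suc n"]]) (auto simp: paths_def)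

lemma paths_hd_last:
  assumes "p \<in> paths S M n"
  shows "p \<noteq> [] \<and> hd p \<in> S \<and> last p \<in> S"
proof -
  have "p \<noteq> []" using assms by (auto simp: paths_def)
  then show ?thesis using assms hd_in_set[of p] last_in_set[of p] by (auto simp: paths_def)
qed

lemma paths_0: "paths S M 0 = (\<lambda>x. [x]) ` S"
  by (auto simp: paths_def length_Suc_conv)

lemma paths_Suc: "paths S M (Suc n) = (\<Union>b\<in>S. Cons b ` {p \<in> paths S M n. M (hd p) b = 1})"
proof (intro equalityI subsetI)
  fix p assume "p \<in> paths S M (Suc n)"
  then obtain b p' where p: "p = b # p'" "length p' = Suc n" "set p' \<subseteq> S" "b \<in> S"
    "successively (\<lambda>x y. M y x = 1) (b # p')"
    by (auto simp: paths_def length_Suc_conv)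
  then have "M (hd p') b = 1" "successively (\<lambda>x y. M y x = 1) p'" by (auto simp: successively_Cons)
  then show "p \<in> (\<Union>b\<in>S. Cons b ` {p \<in> paths S M n. M (hd p) b = 1})"
    using p by (auto simp: paths_def)
next
  fix p assume "p \<in> (\<Union>b\<in>S. Cons b ` {p \<in> paths S M n. M (hd p) b = 1})"
  then show "p \<in> paths S M (Suc n)" by (auto simp: paths_def successively_Cons)
qed

lemma paths_Suc_hd_last:
  assumes b: "b \<in> S"
  shows "{p \<in> paths S M (Suc n). hd p = b \<and> last p = a}
    = Cons b ` (\<Union>z\<in>{z \<in> S. M z b = 1}. {p \<in> paths S M n. hd p = z \<and> last p = a})"
    (is "?P = Cons b ` ?U")
proof (intro equalityI subsetI)
  fix p assume "p \<in> ?P"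
  then obtain b' p' where "p = b' # p'" "b' \<in> S" "p' \<in> paths S M n" "M (hd p') b' = 1"
    "hd p = b" "last p = a"
    unfolding paths_Suc by auto
  moreover have "hd p' \<in> S" "p' \<noteq> []" using paths_hd_last[OF \<open>p' \<in> paths S M n\<close>] by auto
  ultimately show "p \<in> Cons b ` ?U" by auto
next
  fix p assume "p \<in> Cons b ` ?U"
  then obtain z p' where "p = b # p'" "z \<in> S" "M z b = 1" "p' \<in> paths S M n" "hd p' = z" "last p' = a"
    by auto
  then show "p \<in> ?P" using b unfolding paths_Suc by (auto simp: paths_def)
qed

lemma mpow_eq_card_paths:
  assumes S: "finite S" and M01: "\<forall>x\<in>S. \<forall>y\<in>S. M x y = 0 \<or> M x y = 1"
    and a: "a \<in> S" and b: "b \<in> S"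
  shows "mpow S M n a b = card {p \<in> paths S M n. hd p = b \<and> last p = a}"
  using b
proof (induction n arbitrary: b)
  case 0
  have "{p \<in> paths S M 0. hd p = b \<and> last p = a} = (if a = b then {[b]} else {})"
    using 0 by (auto simp: paths_0)
  then show ?case by simp
next
  case (Suc n)
  define Q where "Q z = {p \<in> paths S M n. hd p = z \<and> last p = a}" for z
  define Z where "Z = {z \<in> S. M z b = 1}"
  have "mpow S M (Suc n) a b = (\<Sum>z\<in>S. if M z b = 1 then real (card (Q z)) else 0)"
  proof (simp, intro sum.cong refl)
    fix z assume z: "z \<in> S"
    show "mpow S M n a z * M z b = (if M z b = 1 then real (card (Q z)) else 0)"
    proof (cases "M z b = 1")
      case True then show ?thesis using Suc.IH[OF z] unfolding Q_def by simp
    next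
      case False then have "M z b = 0" using M01 z Suc.prems by blast
      then show ?thesis by simp
    qed
  qed
  also have "\<dots> = (\<Sum>z\<in>Z. real (card (Q z)))"
    unfolding Z_def using S by (simp add: sum.inter_filter)
  also have "\<dots> = real (card (\<Union>z\<in>Z. Q z))"
    using S finite_paths[OF S] unfolding Z_def Q_def
    by (subst card_UN_disjoint) auto
  also have "\<dots> = real (card (Cons b ` (\<Union>z\<in>Z. Q z)))"
    by (simp add: card_image)
  also have "Cons b ` (\<Union>z\<in>Z. Q z) = {p \<in> paths S M (Suc n). hd p = b \<and> last p = a}"
    unfolding Z_def Q_def by (rule paths_Suc_hd_last[OF Suc.prems, symmetric])
  finally show ?case .
qed

lemma mpow_total_eq_card_paths:
  assumes S: "finite S" and M01: "\<forall>x\<in>S. \<forall>y\<in>S. M x y = 0 \<or> M x y = 1"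
  shows "mpow_total S M n = real (card (paths S M n))"
proof -
  have eq: "paths S M n = (\<Union>a\<in>S. \<Union>b\<in>S. {p \<in> paths S M n. hd p = b \<and> last p = a})"
    using paths_hd_last[of _ S M n] by blast
  have "real (card (paths S M n))
      = real (\<Sum>a\<in>S. card (\<Union>b\<in>S. {p \<in> paths S M n. hd p = b \<and> last p = a}))"
    using S finite_paths[OF S] by (subst eq, subst card_UN_disjoint) auto
  also have "\<dots> = real (\<Sum>a\<in>S. \<Sum>b\<in>S. card {p \<in> paths S M n. hd p = b \<and> last p = a})"
    using S finite_paths[OF S]
    by (intro arg_cong[where f = real] sum.cong refl, subst card_UN_disjoint) auto
  also have "\<dots> = mpow_total S M n"
    unfolding mpow_total_def using mpow_eq_card_paths[OF S M01] by simp
  finally show ?thesis by simp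
qed

section \<open>Admissible words\<close>

lemma admissible_iff_successively: "admissible T w \<longleftrightarrow> successively (\<lambda>x y. T y x = 1) w"
  by (simp add: admissible_def successively_conv_nth)

lemma admissible_appendD: "admissible T (x @ y) \<Longrightarrow> admissible T x \<and> admissible T y"
  by (simp add: admissible_iff_successively successively_append_iff)

lemma admissible_take_drop: "admissible T s \<Longrightarrow> admissible T (take k (drop i s))"
  by (metis append_take_drop_id admissible_appendD)

lemma finite_adm_words: "finite (adm_words (T :: 'a::finite \<Rightarrow> 'a \<Rightarrow> real) n)"
  by (rule finite_subset[OF _ finite_lists_length_eq[of UNIV n]]) (auto simp: adm_words_def)

lemma paths_UNIV_eq_adm_words: "paths UNIV T n = adm_words T (Suc n)"
  by (auto simp: paths_def adm_words_def admissible_iff_successively)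

lemma adm_words_0: "adm_words T 0 = {[]}"
  by (auto simp: adm_words_def admissible_def)

lemma card_adm_words_ge:
  fixes T :: "'a::finite \<Rightarrow> 'a \<Rightarrow> real"
  assumes T01: "\<forall>x y. T x y = 0 \<or> T x y = 1"
  shows "spectral_radius UNIV T ^ n \<le> real (card (adm_words T (Suc n)))"
proof -
  have "\<forall>x\<in>UNIV. \<forall>y\<in>UNIV. T x y \<ge> 0" using T01 by (metis order_refl zero_le_one)
  then have "spectral_radius UNIV T ^ n \<le> mpow_total UNIV T n"
    by (intro spectral_radius_power_le_mpow_total) auto
  also have "\<dots> = real (card (paths UNIV T n))"
    using T01 by (intro mpow_total_eq_card_paths) auto
  finally show ?thesis by (simp add: paths_UNIV_eq_adm_words)
qed

lemma card_adm_words_le: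
  fixes T :: "'a::finite \<Rightarrow> 'a \<Rightarrow> real"
  assumes T01: "\<forall>x y. T x y = 0 \<or> T x y = 1" and l: "spectral_radius UNIV T > 0"
  shows "\<exists>C\<ge>1. \<forall>n. real (card (adm_words T n))
           \<le> C * (real n + 1) ^ card (UNIV :: 'a set) * spectral_radius UNIV T ^ n"
proof -
  let ?l = "spectral_radius UNIV T"
  obtain c where c: "\<And>n. mpow_total UNIV T n \<le> c * (real n + 1) ^ card (UNIV :: 'a set) * ?l ^ n"
    using mpow_total_le_poly_exp[OF finite_UNIV l] norm_eigenvalue_le_spectral_radius[OF finite_UNIV]
    by blast
  define C where "C = max 1 (c / ?l)"
  have C1: "C \<ge> 1" by (simp add: C_def)
  have "real (card (adm_words T n)) \<le> C * (real n + 1) ^ card (UNIV :: 'a set) * ?l ^ n" for n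
  proof (cases n)
    case 0
    then show ?thesis using C1 by (simp add: adm_words_0)
  next
    case (Suc m)
    have "real (card (adm_words T n)) = mpow_total UNIV T m"
      using mpow_total_eq_card_paths[of UNIV T m] T01 Suc by (simp add: paths_UNIV_eq_adm_words)
    also have "\<dots> \<le> (c / ?l) * (real m + 1) ^ card (UNIV :: 'a set) * ?l ^ n"
      using c[of m] l Suc by simp
    also have "\<dots> \<le> C * (real n + 1) ^ card (UNIV :: 'a set) * ?l ^ n"
      using l Suc C1 by (intro mult_right_mono mult_mono power_mono) (auto simp: C_def)
    finally show ?thesis .
  qed
  then show ?thesis using C1 by blast
qed

lemma exists_edge_if_spectral_radius_pos:
  fixes T :: "'a::finite \<Rightarrow> 'a \<Rightarrow> real"
  assumes "spectral_radius UNIV T > 0"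
  shows "\<exists>x y. T y x \<noteq> 0"
proof (rule ccontr)
  assume "\<not> (\<exists>x y. T y x \<noteq> 0)"
  then have T0: "T = (\<lambda>x y. 0)" by auto
  obtain lam where lam: "is_eigenvalue UNIV T lam" "cmod lam = spectral_radius UNIV T"
    using spectral_radius_attained[OF finite_UNIV UNIV_not_empty] by blast
  then obtain v x where "v x \<noteq> 0" "0 = lam * v x"
    unfolding is_eigenvalue_def T0 by auto
  then show False using lam(2) assms by simp
qed

lemma successively_if_trancl:
  assumes "(x, z) \<in> {(a, b). T b a = (1::real)}\<^sup>+"
  shows "\<exists>c. successively (\<lambda>x y. T y x = 1) (x # c @ [z])"
  using assms
proof (induction rule: trancl_induct)
  case (base y)
  then show ?case by (intro exI[of _ "[]"]) simp
next
  case (step y z)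
  then obtain c where "successively (\<lambda>x y. T y x = 1) (x # c @ [y])" by blast
  then have "successively (\<lambda>x y. T y x = 1) (x # (c @ [y]) @ [z])"
    using step(2) successively_append_iff[of "\<lambda>x y. T y x = 1" "x # c @ [y]" "[z]"] by simp
  then show ?case by blast
qed

lemma connecting_words_bounded:
  fixes T :: "'a::finite \<Rightarrow> 'a \<Rightarrow> real"
  assumes irr: "irreducible01 T" and edge: "T y0 x0 = 1"
  shows "\<exists>m. \<forall>a b. \<exists>c. length c \<le> m \<and> admissible T (b # c @ [a])"
proof -
  let ?E = "{(a, b). T b a = (1::real)}"
  have ex: "\<exists>c. admissible T (b # c @ [a])" for a b
  proof -
    have "(b, x0) \<in> ?E\<^sup>*" "(x0, y0) \<in> ?E" "(y0, a) \<in> ?E\<^sup>*"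
      using irr edge unfolding irreducible01_def by auto
    then have "(b, a) \<in> ?E\<^sup>+" by (meson rtrancl_into_trancl1 trancl_rtrancl_trancl)
    then show ?thesis using successively_if_trancl admissible_iff_successively by metis
  qed
  define cf where "cf ab = (SOME c. admissible T (snd ab # c @ [fst ab]))" for ab :: "'a \<times> 'a"
  define m where "m = Max (range (\<lambda>ab. length (cf ab)))"
  have "length (cf (a, b)) \<le> m \<and> admissible T (b # cf (a, b) @ [a])" for a b
  proof
    show "length (cf (a, b)) \<le> m" unfolding m_def by (intro Max_ge) auto
    show "admissible T (b # cf (a, b) @ [a])" unfolding cf_def using ex[of b a] someI_ex by simp
  qed
  then show ?thesis by blast
qed

section \<open>Words avoiding the deleted words as paths of the deleted graph\<close>

definition windows :: "nat \<Rightarrow> nat \<Rightarrow> 'a list \<Rightarrow> 'a list list" where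
  "windows k n s = map (\<lambda>i. take k (drop i s)) [0..<Suc n]"

lemma nth_windows: "i \<le> n \<Longrightarrow> windows k n s ! i = take k (drop i s)"
  unfolding windows_def by (simp add: nth_append less_Suc_eq_le del: upt_Suc)

lemma hd_butlast_Cons_tl: "length w \<ge> 2 \<Longrightarrow> w = hd (butlast w) # tl w"
  by (cases w) auto

lemma sublist_if_Ew_windows:
  assumes E: "Ew w (take k (drop (Suc i) s)) (take k (drop i s)) \<noteq> 0"
    and k: "k \<ge> 1" and i: "i + k < length s"
  shows "sublist w s"
proof -
  have e: "tl w = take k (drop (Suc i) s)" "butlast w = take k (drop i s)"
    using E by (auto simp: Ew_def split: if_splits)
  have "length (butlast w) = k" using e(2) i by simp
  then have "length w \<ge> 2" using k by simp
  then have w: "w = hd (butlast w) # tl w" by (rule hd_butlast_Cons_tl)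
  have "hd (butlast w) = s ! i" using e(2) k i by (simp add: hd_take hd_drop_conv_nth)
  moreover have "drop i s = s ! i # drop (Suc i) s" using i by (simp add: Cons_nth_drop_Suc)
  ultimately have "take (Suc k) (drop i s) = w" using e(1) w by simp
  then show ?thesis by (metis sublist_take sublist_drop sublist_order.order_trans)
qed

lemma windows_in_paths_Tk_del:
  assumes k: "k \<ge> 1" and len: "length s = n + k" and adm: "admissible T s"
    and avoid: "\<forall>w\<in>C. \<not> sublist w s"
  shows "windows k n s \<in> paths (adm_words T k) (Tk_del T k C) n"
proof -
  let ?u = "\<lambda>i. take k (drop i s)"
  have adm_u: "?u i \<in> adm_words T k" if "i \<le> n" for i
    using that len admissible_take_drop[OF adm] by (auto simp: adm_words_def)
  have step: "Tk_del T k C (?u (Suc i)) (?u i) = 1" if i: "i < n" for i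
  proof -
    have "butlast (?u (Suc i)) = take (k - 1) (drop (Suc i) s)" using len i by (simp add: butlast_take)
    moreover have "tl (?u i) = take (k - 1) (drop (Suc i) s)" by (simp add: tl_take drop_Suc tl_drop)
    ultimately have "Tk T k (?u (Suc i)) (?u i) = 1"
      using adm_u[of i] adm_u[of "Suc i"] i k len unfolding Tk_def by simp
    moreover have "Ew w (?u (Suc i)) (?u i) = 0" if "w \<in> C" for w
      using sublist_if_Ew_windows[OF _ k, of w i s] avoid that i len by auto
    ultimately show ?thesis unfolding Tk_del_def by simp
  qed
  have "successively (\<lambda>x y. Tk_del T k C y x = 1) (windows k n s)"
    unfolding successively_conv_nth
    by (auto simp: windows_def nth_windows step simp del: upt_Suc)
  moreover have "set (windows k n s) \<subseteq> adm_words T k"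
    using adm_u unfolding windows_def by auto
  ultimately show ?thesis unfolding paths_def by (simp add: windows_def)
qed

lemma inj_on_windows:
  assumes k: "k \<ge> 1"
  shows "inj_on (windows k n) {s. length s = n + k}"
proof (rule inj_onI)
  fix s s' assume s: "s \<in> {s. length s = n + k}" and s': "s' \<in> {s. length s = n + k}"
    and eq: "windows k n s = windows k n s'"
  have rep: "x ! t = (windows k n x ! min t n) ! (t - min t n)" if "length x = n + k" "t < n + k" for x t
    using that k by (simp add: nth_windows min_def)
  show "s = s'"
  proof (rule nth_equalityI)
    show "length s = length s'" using s s' by simp
    fix t assume "t < length s"
    then show "s ! t = s' ! t" using rep[of s t] rep[of s' t] s s' eq by simp
  qed
qed

lemma Tk_del_01:
  assumes k: "k \<ge> 1" and C: "finite C" "C \<subseteq> adm_words T (k + 1)"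
    and u: "u \<in> adm_words T k" and v: "v \<in> adm_words T k"
  shows "Tk_del T k C u v = 0 \<or> Tk_del T k C u v = 1"
proof (cases "\<exists>w\<in>C. Ew w u v = 1")
  case True
  then obtain w0 where w0: "w0 \<in> C" "u = tl w0" "v = butlast w0"
    by (auto simp: Ew_def split: if_splits)
  have uniq: "w = w0" if "w \<in> C" "Ew w u v = 1" for w
  proof -
    have "u = tl w" "v = butlast w" using that(2) by (auto simp: Ew_def split: if_splits)
    moreover have "length w \<ge> 2" "length w0 \<ge> 2" using that(1) w0(1) C(2) k
      by (auto simp: adm_words_def)
    ultimately show ?thesis using w0(2,3) hd_butlast_Cons_tl by metis
  qed
  have "Ew w u v = (if w = w0 then 1 else 0)" if "w \<in> C" for w
    using uniq[OF that] w0(2,3) unfolding Ew_def by auto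
  then have "(\<Sum>w\<in>C. Ew w u v) = 1" using C(1) w0(1) by (simp add: sum.delta')
  moreover have "Tk T k u v = 1"
    using w0 u v k unfolding Tk_def by (simp add: adm_words_def butlast_tl)
  ultimately show ?thesis unfolding Tk_del_def by simp
next
  case False
  then have "(\<Sum>w\<in>C. Ew w u v) = 0" by (intro sum.neutral) (auto simp: Ew_def)
  then show ?thesis unfolding Tk_del_def Tk_def by simp
qed

section \<open>Gluing blocks\<close>

definition subwords :: "nat \<Rightarrow> 'a list set \<Rightarrow> 'a list set" where
  "subwords h W = {v. length v = h \<and> (\<exists>w\<in>W. sublist v w)}"

text \<open>The conditions on the first and last h letters ensure that, once such blocks are joined
  by connectors of length at most k + 1 - 2h, no word of W can straddle a junction.\<close>
definition good_blocks :: "('a \<Rightarrow> 'a \<Rightarrow> real) \<Rightarrow> 'a list set \<Rightarrow> nat \<Rightarrow> nat \<Rightarrow> 'a list set" where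
  "good_blocks T W h L = {B \<in> adm_words T L. (\<forall>w\<in>W. \<not> sublist w B)
     \<and> take h B \<notin> subwords h W \<and> drop (L - h) B \<notin> subwords h W}"

definition glue :: "'a list \<Rightarrow> 'a list list \<Rightarrow> 'a list" where
  "glue c Bs = concat (map (\<lambda>B. B @ c) Bs)"

lemma glue_simps [simp]: "glue c [] = []" "glue c (B # Bs) = B @ c @ glue c Bs"
  by (auto simp: glue_def)

lemma length_glue:
  "\<forall>B\<in>set Bs. length B = L \<Longrightarrow> length (glue c Bs) = length Bs * (L + length c)"
  by (induction Bs) auto

lemma glue_inj:
  assumes G: "\<forall>B\<in>G. length B = L"
  shows "set Bs \<subseteq> G \<Longrightarrow> set Bs' \<subseteq> G \<Longrightarrow> length Bs = length Bs' \<Longrightarrow> glue c Bs = glue c Bs'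
    \<Longrightarrow> Bs = Bs'"
proof (induction Bs arbitrary: Bs')
  case (Cons B Bs)
  then obtain B' Bs'' where Bs': "Bs' = B' # Bs''" by (cases Bs') auto
  have "length B = length B'" using G Cons.prems Bs' by auto
  then have "B = B'" "c @ glue c Bs = c @ glue c Bs''" using Cons.prems(4) Bs' by auto
  then show ?case using Cons Bs' by auto
qed simp

lemma successively_glue:
  assumes bca: "successively P (b # c @ [a])"
    and G: "\<forall>B\<in>G. successively P B \<and> B \<noteq> [] \<and> hd B = a \<and> last B = b"
  shows "set Bs \<subseteq> G \<Longrightarrow> successively P (glue c Bs) \<and> (Bs \<noteq> [] \<longrightarrow> hd (glue c Bs) = a)"
proof (induction Bs)
  case (Cons B Bs)
  let ?R = "glue c Bs"
  have B: "successively P B" "B \<noteq> []" "hd B = a" "last B = b" using G Cons.prems by auto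
  have IH1: "successively P ?R" using Cons by auto
  have IH2: "hd ?R = a" if "?R \<noteq> []" using Cons that by (cases Bs) auto
  have "successively P (b # c)" "P (last (b # c)) a"
    using bca successively_append_iff[of P "b # c" "[a]"] by auto
  then have "successively P (b # (c @ ?R))"
    using IH1 IH2 successively_append_iff[of P "b # c" ?R] by auto
  then have "successively P (B @ (c @ ?R))"
    using B successively_append_iff[of P B "c @ ?R"] by (auto simp: successively_Cons)
  then show ?case using B by simp
qed simp

lemma take_prefix_glue:
  assumes "prefix x (glue c Bs)" "h \<le> length x" "1 \<le> h" "\<forall>B\<in>set Bs. h \<le> length B"
  shows "Bs \<noteq> [] \<and> take h x = take h (hd Bs)"
proof (cases Bs)
  case Nil then show ?thesis using assms by (auto simp: prefix_def)
next
  case (Cons B Bs')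
  from assms(1) obtain zs where "B @ c @ glue c Bs' = x @ zs" unfolding prefix_def Cons by auto
  then have "take h (B @ c @ glue c Bs') = take h (x @ zs)" by simp
  then show ?thesis using assms(2,4) Cons by simp
qed

lemma prefix_glue_not_sublist:
  assumes h: "1 \<le> h" "h \<le> L" and Bs: "set Bs \<subseteq> good_blocks T W h L" and w: "w \<in> W"
    and x: "prefix x (glue c Bs)" "h \<le> length x"
  shows "\<not> sublist x w"
proof
  assume "sublist x w"
  have "\<forall>B\<in>set Bs. h \<le> length B" using Bs h by (auto simp: good_blocks_def adm_words_def)
  from take_prefix_glue[OF x h(1) this] have "Bs \<noteq> []" "take h x = take h (hd Bs)" by auto
  moreover have "take h x \<in> subwords h W"
    unfolding subwords_def using x(2) w \<open>sublist x w\<close>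
    by (auto intro: sublist_order.order_trans[OF sublist_take])
  moreover have "hd Bs \<in> good_blocks T W h L" using Bs \<open>Bs \<noteq> []\<close> by (cases Bs) auto
  ultimately show False by (simp add: good_blocks_def)
qed

lemma prefix_append_not_sublist:
  assumes head: "\<And>x. prefix x R \<Longrightarrow> h \<le> length x \<Longrightarrow> \<not> sublist x w"
    and h: "1 \<le> h" and x: "prefix x (c @ R)" "length c + h \<le> length x"
  shows "\<not> sublist x w"
proof
  assume "sublist x w"
  from x(1) consider "prefix x c" | us where "x = c @ us" "prefix us R"
    unfolding prefix_append by blast
  then show False
  proof cases
    case 1
    then show ?thesis using prefix_length_le[OF 1] h x(2) by simp
  next
    case 2
    have "sublist us w" using \<open>sublist x w\<close> 2(1) by (metis sublist_append_leftI sublist_order.order_trans)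
    then show ?thesis using head[OF 2(2)] 2(1) x(2) by simp
  qed
qed

lemma append_not_sublist:
  assumes head: "\<And>x. prefix x R \<Longrightarrow> h \<le> length x \<Longrightarrow> \<not> sublist x w"
    and R: "\<not> sublist w R" and h: "1 \<le> h" "length c + h \<le> length w"
  shows "\<not> sublist w (c @ R)"
proof
  assume "sublist w (c @ R)"
  then consider "sublist w c" | "sublist w R" | x1 x2 where "w = x1 @ x2" "suffix x1 c" "prefix x2 R"
    unfolding sublist_append by blast
  then show False
  proof cases
    case 1
    then show ?thesis using sublist_length_le[OF 1] h by simp
  next
    case 2
    then show ?thesis using R by simp
  next
    case 3
    have "length x1 \<le> length c" using 3(2) by (auto simp: suffix_def)
    then show ?thesis using head[OF 3(3)] 3(1) h by auto
  qed
qed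

lemma glue_avoids:
  assumes W: "\<forall>w\<in>W. length w = k + 1" and h: "1 \<le> h" "h \<le> L" "2 * h + length c \<le> k + 1"
    and w: "w \<in> W"
  shows "set Bs \<subseteq> good_blocks T W h L \<Longrightarrow> \<not> sublist w (glue c Bs)"
proof (induction Bs)
  case Nil
  then show ?case using W w by auto
next
  case (Cons B Bs)
  let ?R = "glue c Bs"
  have B: "B \<in> good_blocks T W h L" and Bs: "set Bs \<subseteq> good_blocks T W h L" using Cons.prems by auto
  have lw: "length w = k + 1" using W w by auto
  have head: "\<not> sublist x w" if "prefix x ?R" "h \<le> length x" for x
    using prefix_glue_not_sublist[OF h(1,2) Bs w that] .
  show ?case
  proof
    assume "sublist w (glue c (B # Bs))"
    then consider "sublist w B" | "sublist w (c @ ?R)"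
      | x1 x2 where "w = x1 @ x2" "suffix x1 B" "prefix x2 (c @ ?R)"
      unfolding glue_simps sublist_append by blast
    then show False
    proof cases
      case 1
      then show ?thesis using B w by (auto simp: good_blocks_def)
    next
      case 2
      then show ?thesis using append_not_sublist[OF head Cons.IH[OF Bs] h(1)] lw h(3) by simp
    next
      case 3
      show ?thesis
      proof (cases "h \<le> length x1")
        case True
        obtain zs where zs: "B = zs @ x1" using 3(2) by (auto simp: suffix_def)
        have lB: "length B = L" using B by (auto simp: good_blocks_def adm_words_def)
        then have "L - (h + length zs) = length x1 - h" using zs by simp
        then have "drop (L - h) B = drop (length x1 - h) x1" using zs lB True by simp
        moreover have "sublist (drop (length x1 - h) x1) w"
          unfolding 3(1) by (metis append_take_drop_id append.assoc sublist_appendI)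
        ultimately have "drop (L - h) B \<in> subwords h W" using w True by (auto simp: subwords_def)
        then show ?thesis using B by (simp add: good_blocks_def)
      next
        case False
        then have "length c + h \<le> length x2" using 3(1) lw h by simp
        then show ?thesis using prefix_append_not_sublist[OF head h(1) 3(3)] 3(1) by simp
      qed
    qed
  qed
qed

lemma glue_good_blocks_admissible_avoiding:
  assumes W: "W \<subseteq> adm_words T (k + 1)" and h: "1 \<le> h" "2 * h + length c \<le> k + 1" "h \<le> L"
    and Bs: "set Bs \<subseteq> good_blocks T W h L" "\<forall>B\<in>set Bs. hd B = a \<and> last B = b"
    and conn: "admissible T (b # c @ [a])"
  shows "admissible T (glue c Bs) \<and> (\<forall>w\<in>W. \<not> sublist w (glue c Bs))"
proof
  have "\<forall>B\<in>set Bs. successively (\<lambda>x y. T y x = 1) B \<and> B \<noteq> [] \<and> hd B = a \<and> last B = b"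
    using Bs h by (auto simp: good_blocks_def adm_words_def admissible_iff_successively)
  then show "admissible T (glue c Bs)"
    using successively_glue[OF conn[unfolded admissible_iff_successively], of "set Bs" Bs]
    by (simp add: admissible_iff_successively)
  have "\<forall>w\<in>W. length w = k + 1" using W by (auto simp: adm_words_def)
  then show "\<forall>w\<in>W. \<not> sublist w (glue c Bs)"
    using glue_avoids[of W k h L c _ Bs T] h Bs(1) by blast
qed

lemma card_good_blocks_power_le_mpow_total:
  fixes T :: "'a::finite \<Rightarrow> 'a \<Rightarrow> real"
  assumes k: "1 \<le> k" "k \<le> L" and W: "W \<subseteq> adm_words T (k + 1)"
    and h: "1 \<le> h" "2 * h + length c \<le> k + 1"
    and G: "G \<subseteq> good_blocks T W h L" and ends: "\<forall>B\<in>G. hd B = a \<and> last B = b"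
    and conn: "admissible T (b # c @ [a])" and j: "1 \<le> j"
  shows "real (card G) ^ j \<le> mpow_total (adm_words T k) (Tk_del T k W) (j * (L + length c) - k)"
proof -
  let ?S = "adm_words T k" and ?M = "Tk_del T k W" and ?n = "j * (L + length c) - k"
  define Bss where "Bss = {Bs. set Bs \<subseteq> G \<and> length Bs = j}"
  have GL: "\<forall>B\<in>G. length B = L" using G by (auto simp: good_blocks_def adm_words_def)
  have hL: "h \<le> L" using h k by linarith
  have glue_len: "length (glue c Bs) = ?n + k" if "Bs \<in> Bss" for Bs
  proof -
    have "L + length c \<le> j * (L + length c)" using j by simp
    then have "k \<le> j * (L + length c)" using k by linarith
    moreover have "length (glue c Bs) = j * (L + length c)"
      using that length_glue[of Bs L c] GL by (auto simp: Bss_def)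
    ultimately show ?thesis by simp
  qed
  have "windows k ?n (glue c Bs) \<in> paths ?S ?M ?n" if Bs: "Bs \<in> Bss" for Bs
    using glue_good_blocks_admissible_avoiding[OF W h hL, of Bs a b] G ends conn Bs
    by (intro windows_in_paths_Tk_del[OF k(1) glue_len[OF Bs]]) (auto simp: Bss_def)
  then have image: "(windows k ?n \<circ> glue c) ` Bss \<subseteq> paths ?S ?M ?n" by auto
  have "inj_on (windows k ?n \<circ> glue c) Bss"
  proof (rule comp_inj_on)
    show "inj_on (glue c) Bss" using glue_inj[OF GL] by (intro inj_onI) (auto simp: Bss_def)
    show "inj_on (windows k ?n) (glue c ` Bss)"
      by (rule inj_on_subset[OF inj_on_windows[OF k(1)]]) (use glue_len in auto)
  qed
  then have "card Bss \<le> card (paths ?S ?M ?n)"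
    by (rule card_inj_on_le[OF _ image finite_paths[OF finite_adm_words]])
  moreover have "G \<subseteq> adm_words T L" using G by (auto simp: good_blocks_def)
  then have "card Bss = card G ^ j"
    unfolding Bss_def by (intro card_lists_length_eq finite_subset[OF _ finite_adm_words[of T L]])
  moreover have "\<forall>x\<in>?S. \<forall>y\<in>?S. ?M x y = 0 \<or> ?M x y = 1"
    using Tk_del_01[OF k(1) finite_subset[OF W finite_adm_words] W] by blast
  then have "mpow_total ?S ?M ?n = real (card (paths ?S ?M ?n))"
    by (rule mpow_total_eq_card_paths[OF finite_adm_words])
  ultimately show ?thesis by (metis of_nat_le_iff of_nat_power)
qed

lemma spectral_radius_Tk_del_ge_if_good_blocks:
  fixes T :: "'a::finite \<Rightarrow> 'a \<Rightarrow> real"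
  assumes k: "1 \<le> k" "k \<le> L" and W: "W \<subseteq> adm_words T (k + 1)"
    and h: "1 \<le> h" "2 * h + length c \<le> k + 1"
    and G: "G \<subseteq> good_blocks T W h L" and ends: "\<forall>B\<in>G. hd B = a \<and> last B = b"
    and conn: "admissible T (b # c @ [a])"
    and rho: "1 < rho" "rho ^ (L + length c) \<le> real (card G)"
  shows "rho \<le> spectral_radius (adm_words T k) (Tk_del T k W)"
  using card_good_blocks_power_le_mpow_total[OF k W h G ends conn] k
  by (intro spectral_radius_ge_if_mpow_total_grows[OF finite_adm_words rho(1) _ rho(2),
        where f = "\<lambda>j. j * (L + length c) - k"]) auto

section \<open>Counting blocks\<close>

lemma card_adm_words_containing_le:
  fixes T :: "'a::finite \<Rightarrow> 'a \<Rightarrow> real"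
  assumes W: "\<forall>w\<in>W. length w = m" "finite W" and L: "m \<le> L"
  shows "card {B \<in> adm_words T L. \<exists>w\<in>W. sublist w B}
     \<le> (\<Sum>w\<in>W. \<Sum>i\<le>L - m. card (adm_words T i) * card (adm_words T (L - m - i)))"
proof -
  let ?f = "\<lambda>w (x, y). x @ w @ y"
  let ?P = "\<lambda>i. adm_words T i \<times> adm_words T (L - m - i)"
  have "{B \<in> adm_words T L. \<exists>w\<in>W. sublist w B} \<subseteq> (\<Union>w\<in>W. \<Union>i\<le>L - m. ?f w ` ?P i)"
  proof
    fix B assume "B \<in> {B \<in> adm_words T L. \<exists>w\<in>W. sublist w B}"
    then obtain w x y where B: "B = x @ w @ y" "w \<in> W" "admissible T B" "length B = L"
      by (auto simp: adm_words_def sublist_def)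
    then have "admissible T x" "admissible T y"
      using admissible_appendD[of T x "w @ y"] admissible_appendD[of T w y] by simp_all
    moreover have "length x \<le> L - m" "length y = L - m - length x" using B W by auto
    ultimately show "B \<in> (\<Union>w\<in>W. \<Union>i\<le>L - m. ?f w ` ?P i)"
      using B(1,2) by (auto simp: adm_words_def intro!: bexI[of _ w] bexI[of _ "length x"])
  qed
  then have "card {B \<in> adm_words T L. \<exists>w\<in>W. sublist w B} \<le> card (\<Union>w\<in>W. \<Union>i\<le>L - m. ?f w ` ?P i)"
    by (rule card_mono[rotated]) (intro finite_UN_I W(2) finite_atMost finite_imageI
        finite_cartesian_product finite_adm_words)
  also have "\<dots> \<le> (\<Sum>w\<in>W. \<Sum>i\<le>L - m. card (?f w ` ?P i))"
    by (intro order_trans[OF card_UN_le[OF W(2)]] sum_mono card_UN_le finite_atMost)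
  also have "\<dots> \<le> (\<Sum>w\<in>W. \<Sum>i\<le>L - m. card (?P i))"
    by (intro sum_mono card_image_le finite_cartesian_product finite_adm_words)
  finally show ?thesis by (simp add: card_cartesian_product)
qed

lemma card_adm_words_take_in_le:
  fixes T :: "'a::finite \<Rightarrow> 'a \<Rightarrow> real"
  assumes F: "finite F" "\<forall>v\<in>F. length v = h" and h: "h \<le> L"
  shows "card {B \<in> adm_words T L. take h B \<in> F} \<le> card F * card (adm_words T (L - h))"
proof -
  have "{B \<in> adm_words T L. take h B \<in> F} \<subseteq> (\<Union>v\<in>F. (\<lambda>y. v @ y) ` adm_words T (L - h))"
  proof
    fix B assume B: "B \<in> {B \<in> adm_words T L. take h B \<in> F}"
    then have "admissible T (drop h B)" "length (drop h B) = L - h"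
      using admissible_appendD[of T "take h B" "drop h B"] by (auto simp: adm_words_def)
    then show "B \<in> (\<Union>v\<in>F. (\<lambda>y. v @ y) ` adm_words T (L - h))"
      using B by (auto simp: adm_words_def intro!: bexI[of _ "take h B"] image_eqI[of _ _ "drop h B"])
  qed
  then have "card {B \<in> adm_words T L. take h B \<in> F} \<le> card (\<Union>v\<in>F. (\<lambda>y. v @ y) ` adm_words T (L - h))"
    by (rule card_mono[rotated]) (intro finite_UN_I F(1) finite_imageI finite_adm_words)
  also have "\<dots> \<le> (\<Sum>v\<in>F. card ((\<lambda>y. v @ y) ` adm_words T (L - h)))" by (rule card_UN_le[OF F(1)])
  also have "\<dots> \<le> (\<Sum>v\<in>F. card (adm_words T (L - h)))" by (intro sum_mono card_image_le finite_adm_words)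
  finally show ?thesis by simp
qed

lemma card_adm_words_drop_in_le:
  fixes T :: "'a::finite \<Rightarrow> 'a \<Rightarrow> real"
  assumes F: "finite F" "\<forall>v\<in>F. length v = h" and h: "h \<le> L"
  shows "card {B \<in> adm_words T L. drop (L - h) B \<in> F} \<le> card F * card (adm_words T (L - h))"
proof -
  have "{B \<in> adm_words T L. drop (L - h) B \<in> F} \<subseteq> (\<Union>v\<in>F. (\<lambda>y. y @ v) ` adm_words T (L - h))"
  proof
    fix B assume B: "B \<in> {B \<in> adm_words T L. drop (L - h) B \<in> F}"
    then have "admissible T (take (L - h) B)" "length (take (L - h) B) = L - h"
      using admissible_appendD[of T "take (L - h) B" "drop (L - h) B"] by (auto simp: adm_words_def)
    then show "B \<in> (\<Union>v\<in>F. (\<lambda>y. y @ v) ` adm_words T (L - h))"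
      using B by (auto simp: adm_words_def intro!: bexI[of _ "drop (L - h) B"] image_eqI[of _ _ "take (L - h) B"])
  qed
  then have "card {B \<in> adm_words T L. drop (L - h) B \<in> F} \<le> card (\<Union>v\<in>F. (\<lambda>y. y @ v) ` adm_words T (L - h))"
    by (rule card_mono[rotated]) (intro finite_UN_I F(1) finite_imageI finite_adm_words)
  also have "\<dots> \<le> (\<Sum>v\<in>F. card ((\<lambda>y. y @ v) ` adm_words T (L - h)))" by (rule card_UN_le[OF F(1)])
  also have "\<dots> \<le> (\<Sum>v\<in>F. card (adm_words T (L - h)))" by (intro sum_mono card_image_le finite_adm_words)
  finally show ?thesis by simp
qed

lemma subwords_subset:
  assumes "\<forall>w\<in>W. length w = m"
  shows "subwords h W \<subseteq> (\<Union>w\<in>W. (\<lambda>i. take h (drop i w)) ` {..m})"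
proof
  fix v assume "v \<in> subwords h W"
  then obtain w ps ss where v: "length v = h" "w \<in> W" "w = ps @ v @ ss"
    by (auto simp: subwords_def sublist_def)
  then have "take h (drop (length ps) w) = v" "length ps \<le> m" using assms by auto
  then show "v \<in> (\<Union>w\<in>W. (\<lambda>i. take h (drop i w)) ` {..m})" using v(2) by force
qed

lemma finite_subwords: "finite W \<Longrightarrow> \<forall>w\<in>W. length w = m \<Longrightarrow> finite (subwords h W)"
  by (rule finite_subset[OF subwords_subset]) auto

lemma card_subwords_le:
  assumes W: "finite W" "\<forall>w\<in>W. length w = m"
  shows "card (subwords h W) \<le> card W * (m + 1)"
proof -
  have "card (subwords h W) \<le> card (\<Union>w\<in>W. (\<lambda>i. take h (drop i w)) ` {..m})"
    using W by (intro card_mono subwords_subset) auto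
  also have "\<dots> \<le> (\<Sum>w\<in>W. card ((\<lambda>i. take h (drop i w)) ` {..m}))" by (rule card_UN_le[OF W(1)])
  also have "\<dots> \<le> (\<Sum>w\<in>W. card {..m})" by (intro sum_mono card_image_le) simp
  finally show ?thesis by simp
qed

lemma exists_hd_last_card_ge:
  fixes G :: "'a::finite list set"
  assumes G: "finite G"
  shows "\<exists>a b. real (card G) \<le> real (card (UNIV::'a set)) ^ 2 * real (card {B \<in> G. hd B = a \<and> last B = b})"
proof -
  define f where "f ab = card {B \<in> G. hd B = fst ab \<and> last B = snd ab}" for ab :: "'a \<times> 'a"
  have "Max (range f) \<in> range f" by (intro Max_in) auto
  then obtain ab0 where ab0: "f ab0 = Max (range f)" by (metis rangeE)
  have "card G = card (\<Union>ab. {B \<in> G. hd B = fst ab \<and> last B = snd ab})"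
    by (intro arg_cong[where f = card]) auto
  also have "\<dots> \<le> (\<Sum>ab\<in>UNIV. f ab)" unfolding f_def by (rule card_UN_le) simp
  also have "\<dots> \<le> (\<Sum>ab\<in>(UNIV::('a \<times> 'a) set). f ab0)" unfolding ab0 by (intro sum_mono Max_ge) auto
  also have "\<dots> = card (UNIV::'a set) ^ 2 * f ab0"
    using card_cartesian_product[of "UNIV :: 'a set" "UNIV :: 'a set"]
    by (simp add: power2_eq_square)
  finally have "real (card G) \<le> real (card (UNIV::'a set) ^ 2 * f ab0)" by (rule of_nat_mono)
  then show ?thesis unfolding f_def by (intro exI[of _ "fst ab0"] exI[of _ "snd ab0"]) simp
qed

section \<open>Many good blocks\<close>

context
  fixes T :: "'a::finite \<Rightarrow> 'a \<Rightarrow> real" and l C :: real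
  assumes l: "l > 0" and C: "C \<ge> 0"
    and growth_lower: "\<And>n. l ^ n \<le> real (card (adm_words T (Suc n)))"
    and growth_upper: "\<And>n. real (card (adm_words T n)) \<le> C * (real n + 1) ^ card (UNIV :: 'a set) * l ^ n"
begin

lemma card_adm_words_le_uniform:
  assumes "n \<le> 2 * k + 2"
  shows "real (card (adm_words T n)) \<le> C * (2 * real k + 3) ^ card (UNIV :: 'a set) * l ^ n"
proof -
  have "(real n + 1) ^ card (UNIV :: 'a set) \<le> (2 * real k + 3) ^ card (UNIV :: 'a set)"
    using assms by (intro power_mono) auto
  then have "C * (real n + 1) ^ card (UNIV :: 'a set) * l ^ n \<le> C * (2 * real k + 3) ^ card (UNIV :: 'a set) * l ^ n"
    using C l by (intro mult_right_mono mult_left_mono) auto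
  then show ?thesis using growth_upper[of n] by linarith
qed

lemma card_adm_words_containing_le_power:
  assumes W: "\<forall>w\<in>W. length w = k + 1" "finite W" "card W \<le> 2"
  shows "real (card {B \<in> adm_words T (2 * k + 2). \<exists>w\<in>W. sublist w B})
    \<le> 2 * C ^ 2 * (2 * real k + 3) ^ (2 * card (UNIV :: 'a set) + 1) * l ^ (k + 1)"
proof -
  let ?d = "card (UNIV :: 'a set)"
  let ?X = "C ^ 2 * (2 * real k + 3) ^ (2 * ?d) * l ^ (k + 1)"
  have split: "real (card (adm_words T i)) * real (card (adm_words T (k + 1 - i))) \<le> ?X"
    if "i \<le> k + 1" for i
  proof -
    have "real (card (adm_words T i)) * real (card (adm_words T (k + 1 - i)))
        \<le> (C * (2 * real k + 3) ^ ?d * l ^ i) * (C * (2 * real k + 3) ^ ?d * l ^ (k + 1 - i))"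
      using that C l by (intro mult_mono card_adm_words_le_uniform) auto
    also have "\<dots> = C ^ 2 * ((2 * real k + 3) ^ ?d * (2 * real k + 3) ^ ?d) * (l ^ i * l ^ (k + 1 - i))"
      by (simp add: power2_eq_square mult_ac)
    also have "\<dots> = ?X" using that by (simp flip: power_add mult_2)
    finally show ?thesis .
  qed
  have "real (card {B \<in> adm_words T (2 * k + 2). \<exists>w\<in>W. sublist w B})
      \<le> (\<Sum>w\<in>W. \<Sum>i\<le>k + 1. real (card (adm_words T i)) * real (card (adm_words T (k + 1 - i))))"
    using of_nat_mono[OF card_adm_words_containing_le[OF W(1,2), of "2 * k + 2" T]] by simp
  also have "\<dots> \<le> (\<Sum>w\<in>W. \<Sum>i\<le>k + 1. ?X)" by (intro sum_mono split) auto
  also have "\<dots> = real (card W) * ((real k + 2) * ?X)" by simp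
  also have "\<dots> \<le> 2 * ((2 * real k + 3) * ?X)"
    using W(3) C l by (intro mult_mono mult_right_mono) auto
  also have "\<dots> = 2 * C ^ 2 * (2 * real k + 3) ^ (2 * ?d + 1) * l ^ (k + 1)" by simp
  finally show ?thesis .
qed

lemma card_boundary_blocks_le:
  assumes W: "\<forall>w\<in>W. length w = k + 1" "finite W" "card W \<le> 2" and h: "h \<le> k + 1"
    and small: "16 * C * l * (2 * real k + 3) ^ (card (UNIV :: 'a set) + 1) \<le> l ^ h"
  shows "real (card (subwords h W)) * real (card (adm_words T (2 * k + 2 - h))) \<le> l ^ (2 * k + 1) / 8"
proof -
  let ?d = "card (UNIV :: 'a set)"
  have "card W * (k + 1 + 1) \<le> 2 * (k + 2)" using W(3) by (intro mult_le_mono) auto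
  then have "card (subwords h W) \<le> 2 * (k + 2)" using card_subwords_le[OF W(2,1), of h] by linarith
  then have "real (card (subwords h W)) \<le> real (2 * (k + 2))" by (rule of_nat_mono)
  then have "real (card (subwords h W)) \<le> 2 * (2 * real k + 3)" by simp
  then have "real (card (subwords h W)) * real (card (adm_words T (2 * k + 2 - h)))
      \<le> (2 * (2 * real k + 3)) * (C * (2 * real k + 3) ^ ?d * l ^ (2 * k + 2 - h))"
    using C l by (intro mult_mono card_adm_words_le_uniform) auto
  also have "\<dots> = (16 * C * l * (2 * real k + 3) ^ (?d + 1)) * l ^ (2 * k + 2 - h) / (8 * l)"
    using l by (simp add: field_simps)
  also have "\<dots> \<le> l ^ h * l ^ (2 * k + 2 - h) / (8 * l)"
    using small l by (intro divide_right_mono mult_right_mono) auto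
  also have "\<dots> = l ^ (2 * k + 1) / 8"
    using h l by (simp flip: power_add)
  finally show ?thesis .
qed

lemma card_good_blocks_ge:
  assumes W: "\<forall>w\<in>W. length w = k + 1" "finite W" "card W \<le> 2" and h: "h \<le> k + 1"
    and contain_small: "8 * C ^ 2 * (2 * real k + 3) ^ (2 * card (UNIV :: 'a set) + 1) \<le> l ^ k"
    and boundary_small: "16 * C * l * (2 * real k + 3) ^ (card (UNIV :: 'a set) + 1) \<le> l ^ h"
  shows "l ^ (2 * k + 1) / 2 \<le> real (card (good_blocks T W h (2 * k + 2)))"
proof -
  let ?L = "2 * k + 2"
  define bad1 where "bad1 = {B \<in> adm_words T ?L. \<exists>w\<in>W. sublist w B}"
  define bad2 where "bad2 = {B \<in> adm_words T ?L. take h B \<in> subwords h W}"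
  define bad3 where "bad3 = {B \<in> adm_words T ?L. drop (?L - h) B \<in> subwords h W}"
  have fin: "finite A" if "A \<subseteq> adm_words T ?L" for A using that finite_adm_words finite_subset by blast
  have "adm_words T ?L \<subseteq> good_blocks T W h ?L \<union> bad1 \<union> bad2 \<union> bad3"
    unfolding good_blocks_def bad1_def bad2_def bad3_def by blast
  then have "card (adm_words T ?L) \<le> card (good_blocks T W h ?L \<union> bad1 \<union> bad2 \<union> bad3)"
    by (rule card_mono[rotated], intro fin) (auto simp: good_blocks_def bad1_def bad2_def bad3_def)
  also have "\<dots> \<le> card (good_blocks T W h ?L) + card bad1 + card bad2 + card bad3"
    using card_Un_le[of "good_blocks T W h ?L \<union> bad1 \<union> bad2" bad3]
      card_Un_le[of "good_blocks T W h ?L \<union> bad1" bad2] card_Un_le[of "good_blocks T W h ?L" bad1]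
    by linarith
  finally have "real (card (adm_words T ?L))
      \<le> real (card (good_blocks T W h ?L)) + real (card bad1) + real (card bad2) + real (card bad3)"
    by linarith
  moreover have "l ^ (2 * k + 1) \<le> real (card (adm_words T ?L))"
    using growth_lower[of "2 * k + 1"] by simp
  moreover have "real (card bad1) \<le> l ^ (2 * k + 1) / 4"
  proof -
    have "real (card bad1) \<le> 2 * C ^ 2 * (2 * real k + 3) ^ (2 * card (UNIV :: 'a set) + 1) * l ^ (k + 1)"
      unfolding bad1_def by (rule card_adm_words_containing_le_power[OF W])
    also have "\<dots> \<le> (l ^ k / 4) * l ^ (k + 1)"
      using contain_small l by (intro mult_right_mono) auto
    also have "\<dots> = l ^ (2 * k + 1) / 4" by (simp add: mult_2 flip: power_add)
    finally show ?thesis .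
  qed
  moreover have "real (card bad2) \<le> l ^ (2 * k + 1) / 8" "real (card bad3) \<le> l ^ (2 * k + 1) / 8"
  proof -
    have F: "finite (subwords h W)" "\<forall>v\<in>subwords h W. length v = h"
      using finite_subwords[OF W(2,1)] by (auto simp: subwords_def)
    have hL: "h \<le> ?L" using h by simp
    have "real (card (subwords h W) * card (adm_words T (?L - h))) \<le> l ^ (2 * k + 1) / 8"
      using card_boundary_blocks_le[OF W h boundary_small] by simp
    moreover have "card bad2 \<le> card (subwords h W) * card (adm_words T (?L - h))"
      unfolding bad2_def by (rule card_adm_words_take_in_le[OF F hL])
    moreover have "card bad3 \<le> card (subwords h W) * card (adm_words T (?L - h))"
      unfolding bad3_def by (rule card_adm_words_drop_in_le[OF F hL])
    ultimately show "real (card bad2) \<le> l ^ (2 * k + 1) / 8" "real (card bad3) \<le> l ^ (2 * k + 1) / 8"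
      by (smt (verit) of_nat_mono)+
  qed
  ultimately show ?thesis by linarith
qed

lemma pf_eigenvalue_Tk_del_ge:
  assumes rho: "1 < rho" "rho < l"
    and conn: "\<forall>a b. \<exists>c. length c \<le> m \<and> admissible T (b # c @ [a])"
    and k: "m + 2 \<le> k"
    and contain_small: "8 * C ^ 2 * (2 * real k + 3) ^ (2 * card (UNIV :: 'a set) + 1) \<le> l ^ k"
    and boundary_small:
      "16 * C * l * (2 * real k + 3) ^ (card (UNIV :: 'a set) + 1) \<le> l ^ ((k + 1 - m) div 2)"
    and many_blocks: "2 * real (card (UNIV :: 'a set)) ^ 2 * l * rho ^ m \<le> (l / rho) ^ (2 * k + 2)"
    and W: "W \<subseteq> adm_words T (k + 1)" "card W \<le> 2"
  shows "rho \<le> pf_eigenvalue (adm_words T k) (Tk_del T k W)"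
proof -
  let ?d = "card (UNIV :: 'a set)"
  define h where "h = (k + 1 - m) div 2"
  define L where "L = 2 * k + 2"
  have h: "1 \<le> h" "2 * h + m \<le> k + 1" using k by (auto simp: h_def)
  have Wlen: "\<forall>w\<in>W. length w = k + 1" using W by (auto simp: adm_words_def)
  have fW: "finite W" using W finite_subset finite_adm_words by blast
  have good: "l ^ (2 * k + 1) / 2 \<le> real (card (good_blocks T W h L))"
    unfolding L_def h_def
    by (rule card_good_blocks_ge[OF Wlen fW W(2) _ contain_small boundary_small]) simp
  have "finite (good_blocks T W h L)"
    by (rule finite_subset[OF _ finite_adm_words]) (auto simp: good_blocks_def)
  then obtain a b where ab: "real (card (good_blocks T W h L))
      \<le> real ?d ^ 2 * real (card {B \<in> good_blocks T W h L. hd B = a \<and> last B = b})"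
    using exists_hd_last_card_ge by blast
  obtain c where c: "length c \<le> m" "admissible T (b # c @ [a])" using conn by blast
  have d0: "real ?d > 0" by (simp add: card_gt_0_iff)
  have "rho ^ (L + length c) \<le> rho ^ L * rho ^ m"
    using rho c by (simp add: power_add power_increasing)
  also have "\<dots> \<le> l ^ (2 * k + 1) / (2 * real ?d ^ 2)"
  proof -
    have "2 * real ?d ^ 2 * l * rho ^ m * rho ^ L \<le> (l / rho) ^ L * rho ^ L"
      using many_blocks rho unfolding L_def by (intro mult_right_mono) auto
    also have "\<dots> = l * l ^ (2 * k + 1)" using rho by (simp add: power_divide L_def)
    finally show ?thesis using d0 rho by (simp add: field_simps)
  qed
  also have "\<dots> \<le> real (card {B \<in> good_blocks T W h L. hd B = a \<and> last B = b})"
    using good ab d0 by (simp add: field_simps)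
  finally have many: "rho ^ (L + length c) \<le> real (card {B \<in> good_blocks T W h L. hd B = a \<and> last B = b})" .
  have "2 * h + length c \<le> k + 1" "1 \<le> k" "k \<le> L" using h c k by (auto simp: L_def)
  then show ?thesis unfolding pf_eigenvalue_def
    by (intro spectral_radius_Tk_del_ge_if_good_blocks[OF _ _ W(1) h(1) _ _ _ c(2) rho(1) many]) auto
qed

end

section \<open>Choosing the word length\<close>

lemma eventually_poly_le_exp_affine:
  fixes q A :: real assumes q: "q > 1"
  shows "\<forall>\<^sub>F k in sequentially. A * (2 * real k + 3) ^ D \<le> q ^ k"
  using eventually_poly_le_exp[OF q, of "\<bar>A\<bar> * 3 ^ D" D]
proof (rule eventually_mono)
  fix k assume *: "\<bar>A\<bar> * 3 ^ D * (real k + 1) ^ D \<le> q ^ k"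
  have "A * (2 * real k + 3) ^ D \<le> \<bar>A\<bar> * (3 * (real k + 1)) ^ D"
    by (intro mult_mono power_mono) auto
  also have "\<dots> = \<bar>A\<bar> * 3 ^ D * (real k + 1) ^ D" by (subst power_mult_distrib) simp
  finally show "A * (2 * real k + 3) ^ D \<le> q ^ k" using * by linarith
qed

lemma eventually_poly_le_exp_half:
  fixes l A :: real assumes l: "l > 1"
  shows "\<forall>\<^sub>F k in sequentially. A * (2 * real k + 3) ^ D \<le> l ^ ((k + 1 - m) div 2)"
proof -
  define mu where "mu = sqrt l"
  have mu1: "mu > 1" and mu2: "mu ^ 2 = l" using l by (auto simp: mu_def)
  have "\<forall>\<^sub>F k in sequentially. (A * mu ^ m) * (2 * real k + 3) ^ D \<le> mu ^ k \<and> m \<le> k"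
    by (intro eventually_conj eventually_poly_le_exp_affine[OF mu1] eventually_ge_at_top)
  then show ?thesis
  proof (rule eventually_mono)
    fix k assume k: "(A * mu ^ m) * (2 * real k + 3) ^ D \<le> mu ^ k \<and> m \<le> k"
    then have "A * (2 * real k + 3) ^ D * mu ^ m \<le> mu ^ (k - m) * mu ^ m"
      by (simp add: mult_ac flip: power_add)
    then have "A * (2 * real k + 3) ^ D \<le> mu ^ (k - m)" using mu1 by simp
    also have "\<dots> \<le> mu ^ (2 * ((k + 1 - m) div 2))" using mu1 by (intro power_increasing) auto
    also have "\<dots> = l ^ ((k + 1 - m) div 2)" by (simp add: power_mult mu2)
    finally show "A * (2 * real k + 3) ^ D \<le> l ^ ((k + 1 - m) div 2)" .
  qed
qed

lemma eventually_le_power: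
  fixes q X :: real assumes q: "q > 1"
  shows "\<forall>\<^sub>F k in sequentially. X \<le> q ^ (2 * k + 2)"
  using eventually_poly_le_exp[OF q, of X 0]
proof (rule eventually_mono)
  fix k assume "X * (real k + 1) ^ 0 \<le> q ^ k"
  moreover have "q ^ k \<le> q ^ (2 * k + 2)" using q by (intro power_increasing) auto
  ultimately show "X \<le> q ^ (2 * k + 2)" by simp
qed

theorem proposition5p2:
  fixes T :: "'a::finite \<Rightarrow> 'a \<Rightarrow> real" and \<rho> :: real
  assumes "\<forall>x y. T x y = 0 \<or> T x y = 1"
    and "irreducible01 T"
    and "\<rho> > 1"
    and "\<rho> < spectral_radius UNIV T"
    and "\<forall>lam. is_eigenvalue UNIV T lam \<and> cmod lam \<noteq> spectral_radius UNIV T \<longrightarrow> cmod lam < \<rho>"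
  shows "\<exists>K::nat. \<forall>k\<ge>K. \<forall>w1 w2. w1 \<in> adm_words T (k + 1) \<longrightarrow> w2 \<in> adm_words T (k + 1) \<longrightarrow>
           pf_eigenvalue (adm_words T k) (Tk_del T k {w1, w2}) \<ge> \<rho>"
proof -
  let ?l = "spectral_radius UNIV T" and ?d = "card (UNIV :: 'a set)"
  have l1: "?l > 1" using assms(3,4) by linarith
  obtain C where C: "C \<ge> 1"
    and upper: "\<And>n. real (card (adm_words T n)) \<le> C * (real n + 1) ^ ?d * ?l ^ n"
    using card_adm_words_le[OF assms(1)] l1 by force
  obtain x y where "T y x = 1" using exists_edge_if_spectral_radius_pos[of T] assms(1) l1 by force
  then obtain m where conn: "\<forall>a b. \<exists>c. length c \<le> m \<and> admissible T (b # c @ [a])"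
    using connecting_words_bounded[OF assms(2)] by blast
  have "\<forall>\<^sub>F k in sequentially. m + 2 \<le> k
      \<and> 8 * C ^ 2 * (2 * real k + 3) ^ (2 * ?d + 1) \<le> ?l ^ k
      \<and> 16 * C * ?l * (2 * real k + 3) ^ (?d + 1) \<le> ?l ^ ((k + 1 - m) div 2)
      \<and> 2 * real ?d ^ 2 * ?l * \<rho> ^ m \<le> (?l / \<rho>) ^ (2 * k + 2)"
    (is "\<forall>\<^sub>F k in _. ?large k")
    using l1 assms(3,4)
    by (intro eventually_conj eventually_ge_at_top eventually_poly_le_exp_affine
        eventually_poly_le_exp_half eventually_le_power) auto
  then obtain K where K: "\<And>k. K \<le> k \<Longrightarrow> ?large k"
    unfolding eventually_sequentially by blast
  have "\<rho> \<le> pf_eigenvalue (adm_words T k) (Tk_del T k {w1, w2})"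
    if "K \<le> k" "w1 \<in> adm_words T (k + 1)" "w2 \<in> adm_words T (k + 1)" for k w1 w2
    using K[OF that(1)] that(2,3) assms(3,4) conn l1 C
    by (intro pf_eigenvalue_Tk_del_ge[OF _ _ card_adm_words_ge[OF assms(1)] upper])
       (auto simp: card_insert_le_m1)
  then show ?thesis by blast
qed

end
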